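(* Let $n,k,d\in\mathbb{N}$, let $a_{1:n}\in(\{0,1\}^d)^n$ be arbitrary, let $h^*\in\mathcal{C}^k_d$, and let $x_t:=h^*(a_t)$ for $t=1,\dots,n$. Then $\mathcal{L}_n(\textsc{Alg1}^k_d)\le 2^{2k+1}d^{2k}$ and $\mathcal{L}_n(\textsc{Alg2}^k_d)\le(2^kd^k+1)\log_2(n+1)$.
   Context: Literals over variables $x_1,\dots,x_d$ are elements of $\{x_1,\dots,x_d,\neg x_1,\dots,\neg x_d\}$. $\mathcal{C}^k_d$ is the class of $k$-CNF Boolean functions on $\{0,1\}^d$: conjunctions $c_1\wedge\dots\wedge c_m$ ($m\ge0$) where each clause $c_y$ is a disjunction of $k$ literals. Let $D:=(2d)^k$ and index the $D$ ordered $k$-tuples $(\ell_1,\dots,\ell_k)$ of literals by $j=1,\dots,D$; the map $\phi:\{0,1\}^d\to\{0,1\}^D$ sends $a$ to the vector whose $j$-th component is $\ell_1(a)\vee\dots\vee\ell_k(a)$ for the $j$-th tuple. For $\mathcal{S}\subseteq\{1,\dots,D\}$, $h_{\mathcal{S}}(c)=\bigwedge_{j\in\mathcal{S}}c^j$. Predictor $\zeta_D$ (dimension $D$, $\alpha=2^{-D/2^D}$): at time $t$, with $\mathcal{A}_t=\{c_\tau:\tau<t,x_\tau=0\}$ and $w_j=\prod_{\tau<t:x_\tau=1}c_\tau^j$ (1 if empty), it predicts $0$ with probability $1$ if $c_t\in\mathcal{A}_t$ and otherwise predicts $1$ with probability $\prod_{j=1}^D\frac{(1-\alpha)+\alpha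 w_jc_t^j}{(1-\alpha)+\alpha w_j}$. Predictor $\pi_D$: with $\mathcal{D}_t=\{j: c_\tau^j=1\ \forall\tau<t\text{ with }x_\tau=1\}$ and $y_t=\bigwedge_{j\in\mathcal{D}_t}c_t^j$, it assigns probability $\frac{t}{t+1}$ to $y_t$ and $\frac1{t+1}$ to $1-y_t$. $\textsc{Alg1}^k_d$ (resp. $\textsc{Alg2}^k_d$) is the predictor obtained by running $\zeta_D$ (resp. $\pi_D$) on the transformed side information $c_t:=\phi(a_t)$ with labels $x_t$. The cumulative log-loss of a predictor $\rho$ is $\mathcal{L}_n(\rho)=-\log_2\prod_{t=1}^n\rho(x_t\mid x_{<t};a_{1:t})$. *)

theory Defs
  imports Complex_Main
begin

text \<open>Boolean vectors in {0,1}^d are modelled as functions nat => bool; only the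
  coordinates 0..<d are relevant. Variables are x_0,...,x_{d-1}.\<close>

datatype literal = Pos nat | Neg nat

fun lit_var :: "literal \<Rightarrow> nat" where
  "lit_var (Pos i) = i" | "lit_var (Neg i) = i"

fun lit_eval :: "literal \<Rightarrow> (nat \<Rightarrow> bool) \<Rightarrow> bool" where
  "lit_eval (Pos i) a = a i" | "lit_eval (Neg i) a = (\<not> a i)"

definition literals :: "nat \<Rightarrow> literal set" where
  "literals d = {l. lit_var l < d}"

definition clause_eval :: "literal list \<Rightarrow> (nat \<Rightarrow> bool) \<Rightarrow> bool" where
  "clause_eval c a = (\<exists>l\<in>set c. lit_eval l a)"

definition kCNF :: "nat \<Rightarrow> nat \<Rightarrow> ((nat \<Rightarrow> bool) \<Rightarrow> bool) set" where
  "kCNF k d = {h. \<exists>cls :: literal list list.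
      (\<forall>c\<in>set cls. length c = k \<and> set c \<subseteq> literals d) \<and>
      h = (\<lambda>a. \<forall>c\<in>set cls. clause_eval c a)}"

definition tuples :: "nat \<Rightarrow> nat \<Rightarrow> literal list set" where
  "tuples k d = {ls. length ls = k \<and> set ls \<subseteq> literals d}"

definition phi :: "(nat \<Rightarrow> bool) \<Rightarrow> literal list \<Rightarrow> bool" where
  "phi a = (\<lambda>ls. clause_eval ls a)"

text \<open>Generic predictors with D = card J components indexed by the finite set J.
  cs t is the side information c_t, xs t the label x_t; times start at 1.\<close>

definition zeta_alpha :: "'j set \<Rightarrow> real" where
  "zeta_alpha J = 2 powr (- (real (card J) / 2 ^ card J))"

definition zeta_w :: "'j set \<Rightarrow> (nat \<Rightarrow> 'j \<Rightarrow> bool) \<Rightarrow> (nat \<Rightarrow> bool) \<Rightarrow> nat \<Rightarrow> 'j \<Rightarrow> real" where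
  "zeta_w J cs xs t j = (\<Prod>\<tau>\<in>{\<tau>\<in>{1..<t}. xs \<tau>}. of_bool (cs \<tau> j))"

definition zeta_prob1 :: "'j set \<Rightarrow> (nat \<Rightarrow> 'j \<Rightarrow> bool) \<Rightarrow> (nat \<Rightarrow> bool) \<Rightarrow> nat \<Rightarrow> real" where
  "zeta_prob1 J cs xs t =
     (if \<exists>\<tau>\<in>{1..<t}. \<not> xs \<tau> \<and> (\<forall>j\<in>J. cs \<tau> j = cs t j) then 0
      else (let \<alpha> = zeta_alpha J in
            \<Prod>j\<in>J. ((1 - \<alpha>) + \<alpha> * zeta_w J cs xs t j * of_bool (cs t j))
                   / ((1 - \<alpha>) + \<alpha> * zeta_w J cs xs t j)))"

definition zeta_cond :: "'j set \<Rightarrow> (nat \<Rightarrow> 'j \<Rightarrow> bool) \<Rightarrow> (nat \<Rightarrow> bool) \<Rightarrow> nat \<Rightarrow> real" where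
  "zeta_cond J cs xs t = (if xs t then zeta_prob1 J cs xs t else 1 - zeta_prob1 J cs xs t)"

definition pi_y :: "'j set \<Rightarrow> (nat \<Rightarrow> 'j \<Rightarrow> bool) \<Rightarrow> (nat \<Rightarrow> bool) \<Rightarrow> nat \<Rightarrow> bool" where
  "pi_y J cs xs t =
     (\<forall>j\<in>{j\<in>J. \<forall>\<tau>\<in>{1..<t}. xs \<tau> \<longrightarrow> cs \<tau> j}. cs t j)"

definition pi_cond :: "'j set \<Rightarrow> (nat \<Rightarrow> 'j \<Rightarrow> bool) \<Rightarrow> (nat \<Rightarrow> bool) \<Rightarrow> nat \<Rightarrow> real" where
  "pi_cond J cs xs t =
     (if xs t = pi_y J cs xs t then real t / (real t + 1) else 1 / (real t + 1))"

definition seq_prob :: "(nat \<Rightarrow> real) \<Rightarrow> nat \<Rightarrow> real" where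
  "seq_prob \<rho> n = (\<Prod>t=1..n. \<rho> t)"

definition log_loss :: "(nat \<Rightarrow> real) \<Rightarrow> nat \<Rightarrow> real" where
  "log_loss \<rho> n = - log 2 (seq_prob \<rho> n)"

definition Alg1_cond :: "nat \<Rightarrow> nat \<Rightarrow> (nat \<Rightarrow> nat \<Rightarrow> bool) \<Rightarrow> (nat \<Rightarrow> bool) \<Rightarrow> nat \<Rightarrow> real" where
  "Alg1_cond k d as xs = zeta_cond (tuples k d) (\<lambda>t. phi (as t)) xs"

definition Alg2_cond :: "nat \<Rightarrow> nat \<Rightarrow> (nat \<Rightarrow> nat \<Rightarrow> bool) \<Rightarrow> (nat \<Rightarrow> bool) \<Rightarrow> nat \<Rightarrow> real" where
  "Alg2_cond k d as xs = pi_cond (tuples k d) (\<lambda>t. phi (as t)) xs"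

end

theory Submission imports Defs begin

text \<open>Under the feature map \<open>phi\<close> the target k-CNF is a conjunction of a set S of
  D = (2d)^k features, so it suffices to analyse \<open>zeta_D\<close> and \<open>pi_D\<close> on labels given by a
  monotone conjunction. Both are controlled by the set of features surviving all positive examples
  so far, which always contains S. The predictor \<open>zeta_D\<close> pays a factor 1 - \<alpha> per feature
  eliminated on a positive example, hence at most D of them, and a factor \<alpha> only on negative
  examples whose feature vector has not been seen negatively before, hence at most 2^D of them;
  as \<alpha>^(2^D) = 2^-D and 1 - \<alpha> \<ge> 2^(1 - 2D), the sequence gets probability at least 2^(-2D^2).
  The predictor \<open>pi_D\<close> errs only on positive examples, each error eliminates a feature, and the
  factors t/(t+1) of its correct steps telescope, giving probability at least (n+1)^-(D+1).\<close>

lemma seq_prob_0 [simp]: "seq_prob \<rho> 0 = 1"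
  by (simp add: seq_prob_def)

lemma seq_prob_Suc: "seq_prob \<rho> (Suc n) = seq_prob \<rho> n * \<rho> (Suc n)"
  by (simp add: seq_prob_def prod.nat_ivl_Suc' mult.commute)

lemma seq_prob_pos_log_loss_le:
  assumes "0 < p" and "p \<le> seq_prob \<rho> n"
  shows "0 < seq_prob \<rho> n \<and> log_loss \<rho> n \<le> - log 2 p"
  using assms by (simp add: log_loss_def)

lemma zeta_w_eq: "zeta_w J cs xs t j = of_bool (\<forall>\<tau>\<in>{1..<t}. xs \<tau> \<longrightarrow> cs \<tau> j)"
  by (auto simp: zeta_w_def prod_zero)

lemma zeta_alpha_pos: "0 < zeta_alpha J"
  by (simp add: zeta_alpha_def)

lemma zeta_alpha_le_1: "zeta_alpha J \<le> 1"
  using powr_mono[of "- (real (card J) / 2 ^ card J)" 0 "2::real"] by (simp add: zeta_alpha_def)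

lemma zeta_alpha_less_1: "finite J \<Longrightarrow> J \<noteq> {} \<Longrightarrow> zeta_alpha J < 1"
  using powr_less_mono[of "- (real (card J) / 2 ^ card J)" 0 "2::real"]
  by (simp add: zeta_alpha_def card_gt_0_iff)

lemma zeta_alpha_pow: "zeta_alpha J ^ 2 ^ card J = 1 / 2 ^ card J"
proof -
  have "zeta_alpha J ^ 2 ^ card J = zeta_alpha J powr real (2 ^ card J)"
    using powr_realpow[OF zeta_alpha_pos[of J], where n = "2 ^ card J"] by simp
  also have "\<dots> = 2 powr (- real (card J))"
    by (simp add: zeta_alpha_def powr_powr)
  finally show ?thesis
    by (simp add: powr_minus powr_realpow divide_simps)
qed

lemma ln_2_ge_half: "1 / 2 \<le> ln (2::real)"
proof -
  have "exp (1 / 2 :: real) ^ 2 = exp 1"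
    by (simp add: power2_eq_square exp_add[symmetric])
  also have "\<dots> \<le> 2 ^ 2"
    using exp_le by simp
  finally have "exp (1 / 2 :: real) \<le> 2"
    by (rule power2_le_imp_le) simp
  then have "ln (exp (1 / 2 :: real)) \<le> ln 2"
    by (subst ln_le_cancel_iff) auto
  then show ?thesis
    by simp
qed

lemma one_minus_two_powr_neg_ge:
  fixes x :: real
  assumes "0 \<le> x" and "x \<le> 1"
  shows "x / 4 \<le> 1 - 2 powr (- x)"
proof -
  have "x * (1 / 2) \<le> x * ln 2"
    using ln_2_ge_half assms(1) by (rule mult_left_mono)
  then have "1 + x / 2 \<le> 1 + x * ln 2"
    by simp
  also have "\<dots> \<le> 2 powr x"
    by (simp add: powr_def mult.commute)
  finally have "2 powr (- x) \<le> 1 / (1 + x / 2)"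
    using assms(1) by (simp add: powr_minus divide_simps)
  moreover have "x * x \<le> x * 2"
    using assms by (intro mult_left_mono) auto
  then have "x / 4 \<le> 1 - 1 / (1 + x / 2)"
    using assms(1) by (simp add: field_simps)
  ultimately show ?thesis
    by linarith
qed

lemma two_pow_le_mult_two_pow: "2 \<le> D \<Longrightarrow> (2::nat) ^ (D + 2) \<le> D * 2 ^ (2 * D - 1)"
proof (induction D rule: dec_induct)
  case base
  show ?case by simp
next
  case (step D)
  then have "(2::nat) ^ (Suc D + 2) \<le> 2 * (D * 2 ^ (2 * D - 1))"
    by simp
  also have "\<dots> \<le> Suc D * 2 ^ (2 * Suc D - 1)"
    using step.hyps by (cases D) (auto simp: algebra_simps)
  finally show ?case .
qed

lemma one_minus_zeta_alpha_ge:
  assumes "2 \<le> card J"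
  shows "1 / 2 ^ (2 * card J - 1) \<le> 1 - zeta_alpha J"
proof -
  let ?D = "card J"
  have "0 \<le> real ?D / 2 ^ ?D" and "real ?D / 2 ^ ?D \<le> 1"
    using less_exp[of ?D] by (simp_all add: divide_le_eq_1)
  then have "real ?D / 2 ^ ?D / 4 \<le> 1 - zeta_alpha J"
    unfolding zeta_alpha_def by (rule one_minus_two_powr_neg_ge)
  moreover have "real (2 ^ (?D + 2)) \<le> real (?D * 2 ^ (2 * ?D - 1))"
    using two_pow_le_mult_two_pow[OF assms] by (rule of_nat_mono)
  then have "2 ^ ?D * 4 \<le> real ?D * 2 ^ (2 * ?D - 1)"
    by (simp add: power_add)
  then have "1 / 2 ^ (2 * ?D - 1) \<le> real ?D / 2 ^ ?D / 4"
    by (simp add: divide_simps)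
  ultimately show ?thesis
    by linarith
qed

lemma zeta_alpha_pow_bound:
  assumes "2 \<le> card J"
  shows "1 / 2 ^ (2 * card J ^ 2) \<le> (1 - zeta_alpha J) ^ card J / 2 ^ card J"
proof -
  let ?D = "card J"
  have "(1 / 2 ^ (2 * ?D - 1)) ^ ?D \<le> (1 - zeta_alpha J) ^ ?D"
    using one_minus_zeta_alpha_ge[OF assms] by (intro power_mono) auto
  then have "(1 / 2 ^ (2 * ?D - 1)) ^ ?D / 2 ^ ?D \<le> (1 - zeta_alpha J) ^ ?D / 2 ^ ?D"
    by (simp add: divide_right_mono)
  moreover have "(1 / 2 ^ (2 * ?D - 1)) ^ ?D / 2 ^ ?D = (1::real) / 2 ^ ((2 * ?D - 1) * ?D + ?D)"
    by (simp add: power_add power_mult power_divide)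
  moreover have "(2 * ?D - 1) * ?D + ?D = 2 * ?D ^ 2"
    using assms by (cases ?D) (simp_all add: power2_eq_square algebra_simps)
  ultimately show ?thesis
    by simp
qed

locale monotone_conjunction =
  fixes J :: "'j set" and S :: "'j set" and cs :: "nat \<Rightarrow> 'j \<Rightarrow> bool" and xs :: "nat \<Rightarrow> bool"
  assumes finite_J: "finite J"
    and target_subset: "S \<subseteq> J"
    and labels: "xs t \<longleftrightarrow> (\<forall>j\<in>S. cs t j)"
begin

definition surviving :: "nat \<Rightarrow> 'j set" where
  "surviving t = {j\<in>J. \<forall>\<tau>\<in>{1..<t}. xs \<tau> \<longrightarrow> cs \<tau> j}"

definition repeated_negative :: "nat \<Rightarrow> bool" where
  "repeated_negative t \<longleftrightarrow> (\<exists>\<tau>\<in>{1..<t}. \<not> xs \<tau> \<and> (\<forall>j\<in>J. cs \<tau> j = cs t j))"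

definition fresh_negatives :: "nat \<Rightarrow> nat set" where
  "fresh_negatives n = {t\<in>{1..n}. \<not> xs t \<and> \<not> repeated_negative t}"

lemma surviving_subset: "surviving t \<subseteq> J"
  by (auto simp: surviving_def)

lemma target_subset_surviving: "S \<subseteq> surviving t"
  using target_subset labels by (auto simp: surviving_def)

lemma surviving_Suc:
  "0 < t \<Longrightarrow> surviving (Suc t) = (if xs t then {j\<in>surviving t. cs t j} else surviving t)"
  by (auto simp: surviving_def less_Suc_eq)

lemma card_eliminated_Suc:
  assumes "0 < t"
  shows "card (J - surviving (Suc t)) = card (J - surviving t) + card (surviving t - surviving (Suc t))"
proof -
  have "J - surviving (Suc t) = (J - surviving t) \<union> (surviving t - surviving (Suc t))"
    using surviving_subset surviving_Suc[OF assms] by auto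
  moreover have "finite (surviving t)"
    using finite_J surviving_subset by (rule finite_subset[rotated])
  moreover have "(J - surviving t) \<inter> (surviving t - surviving (Suc t)) = {}"
    by blast
  ultimately show ?thesis
    using finite_J by (simp add: card_Un_disjoint)
qed

lemma card_eliminated_le: "card (J - surviving t) \<le> card (J - S)"
  using finite_J target_subset_surviving by (intro card_mono) auto

lemma positive_not_repeated_negative: "xs t \<Longrightarrow> \<not> repeated_negative t"
  using target_subset labels by (auto simp: repeated_negative_def)

lemma fresh_negatives_Suc:
  "fresh_negatives (Suc n) =
     (if \<not> xs (Suc n) \<and> \<not> repeated_negative (Suc n) then insert (Suc n) (fresh_negatives n)
      else fresh_negatives n)"
  by (auto simp: fresh_negatives_def le_Suc_eq)

lemma fresh_negatives_empty: "S = {} \<Longrightarrow> fresh_negatives n = {}"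
  using labels by (auto simp: fresh_negatives_def)

text \<open>Fresh negative times carry pairwise distinct feature vectors.\<close>
lemma card_fresh_negatives_le: "card (fresh_negatives n) \<le> 2 ^ card J"
proof -
  let ?features = "\<lambda>t. {j\<in>J. cs t j}"
  have "inj_on ?features (fresh_negatives n)"
  proof (rule inj_onI)
    fix s t
    assume "s \<in> fresh_negatives n" "t \<in> fresh_negatives n" "?features s = ?features t"
    then show "s = t"
      by (cases s t rule: linorder_cases)
        (auto simp: fresh_negatives_def repeated_negative_def set_eq_iff)
  qed
  then have "card (fresh_negatives n) = card (?features ` fresh_negatives n)"
    by (simp add: card_image)
  also have "\<dots> \<le> card (Pow J)"
    using finite_J by (intro card_mono) auto
  finally show ?thesis
    using finite_J by (simp add: card_Pow)
qed

abbreviation \<alpha> :: real where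
  "\<alpha> \<equiv> zeta_alpha J"

lemma zeta_prob1_eq:
  assumes "\<not> repeated_negative t"
  shows "zeta_prob1 J cs xs t = (1 - \<alpha>) ^ card {j\<in>surviving t. \<not> cs t j}"
proof -
  have not_repeated: "\<not> (\<exists>\<tau>\<in>{1..<t}. \<not> xs \<tau> \<and> (\<forall>j\<in>J. cs \<tau> j = cs t j))"
    using assms by (simp add: repeated_negative_def)
  have factor: "((1 - \<alpha>) + \<alpha> * zeta_w J cs xs t j * of_bool (cs t j)) / ((1 - \<alpha>) + \<alpha> * zeta_w J cs xs t j)
      = (if j \<in> {j\<in>surviving t. \<not> cs t j} then 1 - \<alpha> else 1)" if "j \<in> J" for j
  proof -
    have "\<alpha> < 1"
      using finite_J zeta_alpha_less_1 that by blast
    then show ?thesis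
      using that by (auto simp: zeta_w_eq surviving_def)
  qed
  have "zeta_prob1 J cs xs t = (\<Prod>j\<in>J. if j \<in> {j\<in>surviving t. \<not> cs t j} then 1 - \<alpha> else 1)"
    unfolding zeta_prob1_def Let_def if_not_P[OF not_repeated] by (rule prod.cong[OF refl factor])
  also have "\<dots> = (1 - \<alpha>) ^ card (J \<inter> {j\<in>surviving t. \<not> cs t j})"
    using finite_J by (simp add: prod.If_cases)
  also have "J \<inter> {j\<in>surviving t. \<not> cs t j} = {j\<in>surviving t. \<not> cs t j}"
    using surviving_subset by blast
  finally show ?thesis .
qed

lemma zeta_cond_positive:
  assumes "0 < t" and "xs t"
  shows "zeta_cond J cs xs t = (1 - \<alpha>) ^ card (surviving t - surviving (Suc t))"
proof -
  have "{j\<in>surviving t. \<not> cs t j} = surviving t - surviving (Suc t)"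
    using surviving_Suc[OF assms(1)] assms(2) by auto
  then show ?thesis
    using zeta_prob1_eq positive_not_repeated_negative assms(2) by (simp add: zeta_cond_def)
qed

lemma zeta_cond_repeated_negative: "\<not> xs t \<Longrightarrow> repeated_negative t \<Longrightarrow> zeta_cond J cs xs t = 1"
  by (simp add: zeta_cond_def zeta_prob1_def repeated_negative_def)

text \<open>At a fresh negative time some index of the target is violated but still surviving,
  so the predicted probability of 1 is at most 1 - \<alpha>.\<close>
lemma zeta_cond_fresh_negative_ge:
  assumes "\<not> xs t" and "\<not> repeated_negative t"
  shows "\<alpha> \<le> zeta_cond J cs xs t"
proof -
  obtain j where "j \<in> S" "\<not> cs t j"
    using assms(1) labels by blast
  then have "j \<in> {j\<in>surviving t. \<not> cs t j}"
    using target_subset_surviving by blast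
  moreover have "finite {j\<in>surviving t. \<not> cs t j}"
    using surviving_subset by (intro rev_finite_subset[OF finite_J]) auto
  ultimately have "1 \<le> card {j\<in>surviving t. \<not> cs t j}"
    by (metis One_nat_def Suc_leI card_gt_0_iff empty_iff)
  then have "(1 - \<alpha>) ^ card {j\<in>surviving t. \<not> cs t j} \<le> (1 - \<alpha>) ^ 1"
    using zeta_alpha_pos[of J] zeta_alpha_le_1[of J] by (intro power_decreasing) auto
  then show ?thesis
    using assms zeta_prob1_eq by (simp add: zeta_cond_def)
qed

lemma zeta_seq_prob_ge_potential:
  "(1 - \<alpha>) ^ card (J - surviving (Suc n)) * \<alpha> ^ card (fresh_negatives n)
     \<le> seq_prob (zeta_cond J cs xs) n"
proof (induction n)
  case 0
  show ?case
    by (simp add: surviving_def fresh_negatives_def)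
next
  case (Suc n)
  let ?e = "card (J - surviving (Suc n))" and ?f = "card (fresh_negatives n)"
  have \<alpha>: "0 < \<alpha>" "\<alpha> \<le> 1"
    by (rule zeta_alpha_pos, rule zeta_alpha_le_1)
  consider "xs (Suc n)" | "\<not> xs (Suc n)" "repeated_negative (Suc n)"
    | "\<not> xs (Suc n)" "\<not> repeated_negative (Suc n)"
    by blast
  then show ?case
  proof cases
    case 1
    let ?b = "card (surviving (Suc n) - surviving (Suc (Suc n)))"
    have "(1 - \<alpha>) ^ card (J - surviving (Suc (Suc n))) * \<alpha> ^ card (fresh_negatives (Suc n))
        = ((1 - \<alpha>) ^ ?e * \<alpha> ^ ?f) * (1 - \<alpha>) ^ ?b"
      using 1 card_eliminated_Suc[of "Suc n"] by (simp add: fresh_negatives_Suc power_add)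
    also have "\<dots> \<le> seq_prob (zeta_cond J cs xs) n * (1 - \<alpha>) ^ ?b"
      using Suc.IH \<alpha> by (intro mult_right_mono) auto
    finally show ?thesis
      using 1 zeta_cond_positive[of "Suc n"] by (simp add: seq_prob_Suc)
  next
    case 2
    then show ?thesis
      using Suc.IH surviving_Suc[of "Suc n"]
      by (simp add: seq_prob_Suc fresh_negatives_Suc zeta_cond_repeated_negative)
  next
    case 3
    have "finite (fresh_negatives n)" "Suc n \<notin> fresh_negatives n"
      by (auto simp: fresh_negatives_def)
    then have "(1 - \<alpha>) ^ ?e * \<alpha> ^ card (fresh_negatives (Suc n)) = ((1 - \<alpha>) ^ ?e * \<alpha> ^ ?f) * \<alpha>"
      using 3 by (simp add: fresh_negatives_Suc)
    also have "\<dots> \<le> seq_prob (zeta_cond J cs xs) n * zeta_cond J cs xs (Suc n)"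
      using Suc.IH zeta_cond_fresh_negative_ge[OF 3] \<alpha>
      by (intro mult_mono) (auto intro: order_trans[OF _ Suc.IH])
    finally show ?thesis
      using 3 surviving_Suc[of "Suc n"] by (simp add: seq_prob_Suc)
  qed
qed

lemma zeta_seq_prob_ge: "1 / 2 ^ (2 * card J ^ 2) \<le> seq_prob (zeta_cond J cs xs) n"
proof -
  let ?D = "card J" and ?e = "card (J - surviving (Suc n))" and ?f = "card (fresh_negatives n)"
  have \<alpha>: "0 < \<alpha>" "\<alpha> \<le> 1"
    by (rule zeta_alpha_pos, rule zeta_alpha_le_1)
  have potential: "(1 - \<alpha>) ^ ?e * \<alpha> ^ ?f \<le> seq_prob (zeta_cond J cs xs) n"
    by (rule zeta_seq_prob_ge_potential)
  have "\<alpha> ^ 2 ^ ?D \<le> \<alpha> ^ ?f"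
    using card_fresh_negatives_le \<alpha> by (intro power_decreasing) auto
  then have fresh: "1 / 2 ^ ?D \<le> \<alpha> ^ ?f"
    by (simp add: zeta_alpha_pow)
  have "?e \<le> ?D"
    using finite_J by (intro card_mono) auto
  then have eliminated: "(1 - \<alpha>) ^ ?D \<le> (1 - \<alpha>) ^ ?e"
    using \<alpha> by (intro power_decreasing) auto
  have "finite S"
    using finite_J target_subset by (rule finite_subset[rotated])
  then have "card (J - S) = ?D - card S" and "card S = 0 \<longleftrightarrow> S = {}"
    using target_subset by (auto simp: card_Diff_subset)
  \<comment> \<open>The bound on 1 - \<alpha> needs D \<ge> 2; for smaller D either nothing is ever eliminated
    or there are no negative examples.\<close>
  then consider "card (J - S) = 0" | "S = {}" "?D = 1" | "2 \<le> ?D"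
    by linarith
  then show ?thesis
  proof cases
    case 1
    then have "?e = 0"
      using card_eliminated_le by (metis le_0_eq)
    then have "1 / 2 ^ ?D \<le> seq_prob (zeta_cond J cs xs) n"
      using potential fresh by simp
    moreover have "(1::real) / 2 ^ (2 * ?D ^ 2) \<le> 1 / 2 ^ ?D"
      by (intro divide_left_mono power_increasing) (auto simp: power2_eq_square)
    ultimately show ?thesis
      by linarith
  next
    case 2
    have "\<alpha> ^ 2 = 1 / 2"
      using zeta_alpha_pow[of J] 2 by simp
    then have "\<alpha> ^ 2 \<le> (3 / 4) ^ 2"
      by (simp add: power2_eq_square)
    then have "\<alpha> \<le> 3 / 4"
      by (rule power2_le_imp_le) simp
    then have "1 / 4 \<le> (1 - \<alpha>) ^ 1"
      by simp
    also have "\<dots> \<le> (1 - \<alpha>) ^ ?e"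
      using eliminated 2 by simp
    finally show ?thesis
      using potential fresh_negatives_empty[OF 2(1)] 2 by simp
  next
    case 3
    have "1 / 2 ^ (2 * ?D ^ 2) \<le> (1 - \<alpha>) ^ ?D * (1 / 2 ^ ?D)"
      using zeta_alpha_pow_bound[OF 3] by simp
    also have "\<dots> \<le> (1 - \<alpha>) ^ ?e * \<alpha> ^ ?f"
      using eliminated fresh \<alpha> by (intro mult_mono) auto
    finally show ?thesis
      using potential by linarith
  qed
qed

lemma pi_y_eq: "pi_y J cs xs t \<longleftrightarrow> (\<forall>j\<in>surviving t. cs t j)"
  by (simp add: pi_y_def surviving_def)

lemma surviving_Suc_if_pi_correct:
  "0 < t \<Longrightarrow> xs t = pi_y J cs xs t \<Longrightarrow> surviving (Suc t) = surviving t"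
  by (auto simp: surviving_Suc pi_y_eq)

text \<open>A mistake of \<open>pi_D\<close> is always a false negative, and it eliminates an index.\<close>
lemma card_eliminated_Suc_if_pi_wrong:
  assumes "0 < t" and "xs t \<noteq> pi_y J cs xs t"
  shows "card (J - surviving t) < card (J - surviving (Suc t))"
proof -
  have "xs t"
    using assms(2) labels target_subset_surviving by (auto simp: pi_y_eq)
  then obtain j where "j \<in> surviving t" "\<not> cs t j"
    using assms(2) by (auto simp: pi_y_eq)
  then have "surviving t - surviving (Suc t) \<noteq> {}"
    using surviving_Suc[OF assms(1)] \<open>xs t\<close> by auto
  moreover have "finite (surviving t - surviving (Suc t))"
    using surviving_subset by (intro rev_finite_subset[OF finite_J]) auto
  ultimately show ?thesis
    using card_eliminated_Suc[OF assms(1)] by (simp add: card_gt_0_iff)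
qed

lemma pi_seq_prob_ge_potential:
  "(1 / (real n + 1)) ^ Suc (card (J - surviving (Suc n))) \<le> seq_prob (pi_cond J cs xs) n"
proof (induction n)
  case 0
  show ?case
    by (simp add: surviving_def)
next
  case (Suc n)
  let ?e = "card (J - surviving (Suc n))" and ?e' = "card (J - surviving (Suc (Suc n)))"
  define p q where "p = real n + 1" and "q = real n + 2"
  have pq: "0 < p" "p \<le> q" "1 \<le> q" and q: "real (Suc n) + 1 = q"
    by (simp_all add: p_def q_def)
  have IH: "(1 / p) ^ Suc ?e \<le> seq_prob (pi_cond J cs xs) n"
    using Suc.IH by (simp add: p_def)
  have shrink: "(1 / q) ^ m \<le> (1 / p) ^ m" for m
    using pq by (intro power_mono divide_left_mono) auto
  show ?case
  proof (cases "xs (Suc n) = pi_y J cs xs (Suc n)")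
    case True
    have correct: "pi_cond J cs xs (Suc n) = p / q"
      using True by (simp add: pi_cond_def p_def q_def add_ac)
    have "(1 / q) ^ Suc ?e' = (1 / q) ^ ?e / q"
      using surviving_Suc_if_pi_correct[OF _ True] by simp
    also have "\<dots> \<le> (1 / p) ^ ?e / q"
      using shrink pq by (intro divide_right_mono) auto
    also have "\<dots> = (1 / p) ^ Suc ?e * (p / q)"
      using pq by simp
    also have "\<dots> \<le> seq_prob (pi_cond J cs xs) n * (p / q)"
      using IH pq by (intro mult_right_mono) auto
    finally show ?thesis
      unfolding seq_prob_Suc q correct .
  next
    case False
    have wrong: "pi_cond J cs xs (Suc n) = 1 / q"
      using False by (simp add: pi_cond_def q_def)
    have "(1 / q) ^ Suc ?e' \<le> (1 / q) ^ Suc (Suc ?e)"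
      using card_eliminated_Suc_if_pi_wrong[OF _ False] pq by (intro power_decreasing) auto
    also have "\<dots> = (1 / q) ^ Suc ?e * (1 / q)"
      by simp
    also have "\<dots> \<le> seq_prob (pi_cond J cs xs) n * (1 / q)"
      using IH shrink[of "Suc ?e"] pq by (intro mult_right_mono) auto
    finally show ?thesis
      unfolding seq_prob_Suc q wrong .
  qed
qed

lemma pi_seq_prob_ge: "(1 / (real n + 1)) ^ Suc (card J) \<le> seq_prob (pi_cond J cs xs) n"
proof -
  have "card (J - surviving (Suc n)) \<le> card J"
    using finite_J by (intro card_mono) auto
  then have "(1 / (real n + 1)) ^ Suc (card J) \<le> (1 / (real n + 1)) ^ Suc (card (J - surviving (Suc n)))"
    by (intro power_decreasing) auto
  then show ?thesis
    using pi_seq_prob_ge_potential by (rule order_trans)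
qed

end

lemma literals_eq: "literals d = Pos ` {..<d} \<union> Neg ` {..<d}"
proof (rule set_eqI)
  fix l
  show "l \<in> literals d \<longleftrightarrow> l \<in> Pos ` {..<d} \<union> Neg ` {..<d}"
    by (cases l) (auto simp: literals_def)
qed

lemma finite_literals: "finite (literals d)"
  by (simp add: literals_eq)

lemma card_literals: "card (literals d) = 2 * d"
proof -
  have "card (Pos ` {..<d} \<union> Neg ` {..<d}) = card (Pos ` {..<d}) + card (Neg ` {..<d})"
    by (rule card_Un_disjoint) auto
  also have "\<dots> = 2 * d"
    by (simp add: card_image inj_on_def)
  finally show ?thesis
    by (simp add: literals_eq)
qed

lemma tuples_eq: "tuples k d = {ls. set ls \<subseteq> literals d \<and> length ls = k}"
  by (auto simp: tuples_def)

lemma finite_tuples: "finite (tuples k d)"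
  unfolding tuples_eq by (rule finite_lists_length_eq[OF finite_literals])

lemma card_tuples: "card (tuples k d) = (2 * d) ^ k"
  unfolding tuples_eq card_lists_length_eq[OF finite_literals] card_literals ..

lemma kCNF_as_feature_conjunction:
  assumes "h \<in> kCNF k d"
  obtains S where "S \<subseteq> tuples k d" and "\<And>a. h a \<longleftrightarrow> (\<forall>c\<in>S. phi a c)"
proof -
  obtain cls where "\<forall>c\<in>set cls. length c = k \<and> set c \<subseteq> literals d"
    and "h = (\<lambda>a. \<forall>c\<in>set cls. clause_eval c a)"
    using assms unfolding kCNF_def by blast
  then show ?thesis
    by (intro that[of "set cls"]) (auto simp: tuples_def phi_def)
qed

theorem corollary6:
  fixes n k d :: nat
    and as :: "nat \<Rightarrow> nat \<Rightarrow> bool"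
    and h :: "(nat \<Rightarrow> bool) \<Rightarrow> bool"
  assumes "h \<in> kCNF k d"
  defines "xs \<equiv> (\<lambda>t. h (as t))"
  shows "(seq_prob (Alg1_cond k d as xs) n > 0 \<and>
         log_loss (Alg1_cond k d as xs) n \<le> 2 ^ (2 * k + 1) * real d ^ (2 * k)) \<and>
         (seq_prob (Alg2_cond k d as xs) n > 0 \<and>
         log_loss (Alg2_cond k d as xs) n \<le> (2 ^ k * real d ^ k + 1) * log 2 (real n + 1))"
proof -
  obtain S where "S \<subseteq> tuples k d" and "\<And>a. h a \<longleftrightarrow> (\<forall>c\<in>S. phi a c)"
    using kCNF_as_feature_conjunction[OF assms(1)] by blast
  then interpret monotone_conjunction "tuples k d" S "\<lambda>t. phi (as t)" xs
    by unfold_locales (simp_all add: finite_tuples xs_def)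
  let ?D = "card (tuples k d)"
  have D: "real ?D = 2 ^ k * real d ^ k"
    by (simp add: card_tuples power_mult_distrib)
  have "0 < seq_prob (Alg1_cond k d as xs) n \<and>
      log_loss (Alg1_cond k d as xs) n \<le> - log 2 (1 / 2 ^ (2 * ?D ^ 2))"
    unfolding Alg1_cond_def by (rule seq_prob_pos_log_loss_le[OF _ zeta_seq_prob_ge]) simp
  moreover have "- log 2 (1 / 2 ^ (2 * ?D ^ 2)) = real (2 * ?D ^ 2)"
    by (simp add: log_divide log_nat_power)
  moreover have "real (2 * ?D ^ 2) = 2 ^ (2 * k + 1) * real d ^ (2 * k)"
    by (simp only: of_nat_mult of_nat_power D)
      (simp add: power_mult_distrib power_mult[symmetric] power_add mult_ac)
  moreover have "0 < seq_prob (Alg2_cond k d as xs) n \<and>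
      log_loss (Alg2_cond k d as xs) n \<le> - log 2 ((1 / (real n + 1)) ^ Suc ?D)"
    unfolding Alg2_cond_def by (rule seq_prob_pos_log_loss_le[OF _ pi_seq_prob_ge]) simp
  moreover have "- log 2 ((1 / (real n + 1)) ^ Suc ?D) = (2 ^ k * real d ^ k + 1) * log 2 (real n + 1)"
    by (simp add: log_nat_power log_divide D algebra_simps)
  ultimately show ?thesis
    by simp
qed

end
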